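(* Let $q\in\mathbb{C}$, $|q|<1$, $\ell\in\mathbb{N}$ and $\alpha_j,\beta_j\in\mathbb{N}$ for $j=1,\dots,\ell$. In $\mathbb{Q}\langle\pi,y\rangle$ consider $$X=(\pi-\mathbf{1})^{\alpha_1-1}\rho\,y^{\beta_1}(\pi-\mathbf{1})^{\alpha_2}y^{\beta_2}\cdots(\pi-\mathbf{1})^{\alpha_\ell}y^{\beta_\ell},\quad X^\vee=(\pi-\mathbf{1})^{\beta_\ell-1}\rho\,y^{\alpha_\ell}(\pi-\mathbf{1})^{\beta_{\ell-1}}y^{\alpha_{\ell-1}}\cdots(\pi-\mathbf{1})^{\beta_1}y^{\alpha_1}.$$ Then $\mathfrak{z}_q^{\mathrm{III}}[X]=\mathfrak{z}_q^{\mathrm{III}}[X^\vee]$.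
   Context: $\mathbb{Q}\langle\pi,y\rangle$ is the free noncommutative $\mathbb{Q}$-algebra on $\pi,y$, $\mathbf{1}$ its unit, $\rho:=\pi-\mathbf{1}$. For $\mathbf{s}=(s_1,\dots,s_d)$ with $s_1\ge1$, $s_j\ge0$, let $W(\mathbf{s})=\pi^{s_1-1}\rho y\pi^{s_2}y\cdots\pi^{s_d}y$ and $\mathfrak{z}_q^{\mathrm{III}}[\mathbf{s}]=\sum_{k_1>\dots>k_d>0}\frac{q^{k_1}}{\prod_j(1-q^{k_j})^{s_j}}$. $\mathfrak{z}_q^{\mathrm{III}}$ is extended to the $\mathbb{Q}$-span of the elements $W(\mathbf{s})$ linearly by $\mathfrak{z}_q^{\mathrm{III}}[W(\mathbf{s})]=\mathfrak{z}_q^{\mathrm{III}}[\mathbf{s}]$; expanding the powers of $\pi-\mathbf{1}$ shows $X,X^\vee$ lie in this span. *)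

theory Defs
  imports "HOL-Analysis.Analysis"
begin

text \<open>The free noncommutative Q-algebra Q<pi,y>: elements are finitely supported
  functions from words over the alphabet {pi, y} to rationals; multiplication is
  concatenation-convolution.\<close>

datatype letter = LPi | LY

type_synonym ncpoly = "letter list \<Rightarrow> rat"

definition ncpoly_fin :: "ncpoly \<Rightarrow> bool" where
  "ncpoly_fin p \<longleftrightarrow> finite {w. p w \<noteq> 0}"

definition ncadd :: "ncpoly \<Rightarrow> ncpoly \<Rightarrow> ncpoly" where
  "ncadd p r = (\<lambda>w. p w + r w)"

definition ncsub :: "ncpoly \<Rightarrow> ncpoly \<Rightarrow> ncpoly" where
  "ncsub p r = (\<lambda>w. p w - r w)"

definition ncmult :: "ncpoly \<Rightarrow> ncpoly \<Rightarrow> ncpoly" where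
  "ncmult p r = (\<lambda>w. \<Sum>i\<le>length w. p (take i w) * r (drop i w))"

definition ncone :: ncpoly where
  "ncone = (\<lambda>w. if w = [] then 1 else 0)"

definition ncpi :: ncpoly where
  "ncpi = (\<lambda>w. if w = [LPi] then 1 else 0)"

definition ncy :: ncpoly where
  "ncy = (\<lambda>w. if w = [LY] then 1 else 0)"

definition ncrho :: ncpoly where
  "ncrho = ncsub ncpi ncone"

definition ncpow :: "ncpoly \<Rightarrow> nat \<Rightarrow> ncpoly" where
  "ncpow p n = ((ncmult p) ^^ n) ncone"

definition ncprod :: "ncpoly list \<Rightarrow> ncpoly" where
  "ncprod ps = foldr ncmult ps ncone"

definition admissible :: "nat list \<Rightarrow> bool" where
  "admissible s \<longleftrightarrow> s \<noteq> [] \<and> hd s \<ge> 1"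

definition Wword :: "nat list \<Rightarrow> ncpoly" where
  "Wword s = ncprod ([ncpow ncpi (hd s - 1), ncrho, ncy]
                     @ concat (map (\<lambda>k. [ncpow ncpi k, ncy]) (tl s)))"

definition zIII_series :: "complex \<Rightarrow> nat list \<Rightarrow> complex" where
  "zIII_series q s =
     infsum (\<lambda>ks. q ^ (hd ks) / (\<Prod>j<length s. (1 - q ^ (ks ! j)) ^ (s ! j)))
       {ks. length ks = length s \<and> sorted_wrt (>) ks \<and> (\<forall>k\<in>set ks. k > 0)}"

definition zIII :: "complex \<Rightarrow> ncpoly \<Rightarrow> complex" where
  "zIII q v = (SOME r. \<exists>c :: nat list \<Rightarrow> rat.
      finite {s. c s \<noteq> 0} \<and> (\<forall>s. c s \<noteq> 0 \<longrightarrow> admissible s) \<and>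
      v = (\<lambda>w. \<Sum>s\<in>{s. c s \<noteq> 0}. c s * Wword s w) \<and>
      r = (\<Sum>s\<in>{s. c s \<noteq> 0}. of_rat (c s) * zIII_series q s))"

end

theory Submission
  imports Defs
begin

text \<open>Truncating every summation at \<open>N\<close> turns \<open>\<zeta>\<^sub>q\<^sup>I\<^sup>I\<^sup>I\<close> into a linear functional on all
  of \<open>\<rat>\<langle>\<pi>,y\<rangle>\<close>: words act on functions \<open>h\<close> of an exponent \<open>S\<close>, with \<open>\<rho> = \<pi> - 1\<close> acting as
  the shift sum \<open>h \<mapsto> \<Sum>m=1..N. h (S + m)\<close> and \<open>y\<close> as multiplication by \<open>\<Sum>u=1..N. q ^ (S u)\<close>.
  For a word in \<open>\<rho>\<close> and \<open>y\<close> the truncated value is a finite sum that is invariant under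
  reversing the word and exchanging \<open>\<rho>\<close> with \<open>y\<close>, i.e. under \<open>X \<mapsto> X\<^sup>\<or>\<close>. On the other hand the
  truncated value of \<open>W(s)\<close> differs termwise from the partial sums of \<open>\<zeta>\<^sub>q\<^sup>I\<^sup>I\<^sup>I[s]\<close> by factors
  \<open>1 + O(|q| ^ N)\<close>, so by absolute convergence it tends to \<open>\<zeta>\<^sub>q\<^sup>I\<^sup>I\<^sup>I[s]\<close>. Hence the values of \<open>X\<close>
  and \<open>X\<^sup>\<or>\<close>, both in the span of the \<open>W(s)\<close>, are limits of one and the same sequence.\<close>

section \<open>Multiplication by letters\<close>

definition ncsupp :: "ncpoly \<Rightarrow> letter list set" where
  "ncsupp p = {w. p w \<noteq> 0}"

definition ncmonom :: "letter list \<Rightarrow> ncpoly" where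
  "ncmonom v = (\<lambda>w. if w = v then 1 else 0)"

definition nc_lmult :: "letter \<Rightarrow> ncpoly \<Rightarrow> ncpoly" where
  "nc_lmult x M = (\<lambda>w. case w of [] \<Rightarrow> 0 | a # w' \<Rightarrow> if a = x then M w' else 0)"

definition nc_rho_mult :: "ncpoly \<Rightarrow> ncpoly" where
  "nc_rho_mult M = ncsub (nc_lmult LPi M) M"

lemma ncpoly_fin_iff_finite_ncsupp: "ncpoly_fin p \<longleftrightarrow> finite (ncsupp p)"
  by (simp add: ncpoly_fin_def ncsupp_def)

lemma ncone_eq_ncmonom: "ncone = ncmonom []"
  and ncpi_eq_ncmonom: "ncpi = ncmonom [LPi]"
  and ncy_eq_ncmonom: "ncy = ncmonom [LY]"
  by (simp_all add: ncone_def ncpi_def ncy_def ncmonom_def)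

lemma ncmult_ncone_left: "ncmult ncone M = M"
proof
  fix w
  have "ncmult ncone M w = (\<Sum>i\<le>length w. if i = 0 then M w else 0)"
    unfolding ncmult_def ncone_def by (rule sum.cong) auto
  then show "ncmult ncone M w = M w" by simp
qed

lemma ncmult_ncsub_left: "ncmult (ncsub P R) M = ncsub (ncmult P M) (ncmult R M)"
  unfolding ncmult_def ncsub_def by (auto simp: algebra_simps sum_subtractf)

lemma ncmult_split_first:
  "ncmult P M (a # w) = P [] * M (a # w) + (\<Sum>i\<le>length w. P (a # take i w) * M (drop i w))"
  unfolding ncmult_def length_Cons sum.atMost_Suc_shift by simp

lemma ncmult_ncmonom_letter: "ncmult (ncmonom [x]) M = nc_lmult x M"
proof
  fix w
  show "ncmult (ncmonom [x]) M w = nc_lmult x M w"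
  proof (cases w)
    case Nil
    then show ?thesis by (simp add: ncmult_def ncmonom_def nc_lmult_def)
  next
    case (Cons a w')
    have "(\<Sum>i\<le>length w'. ncmonom [x] (a # take i w') * M (drop i w'))
        = (\<Sum>i\<le>length w'. if i = 0 then (if a = x then M w' else 0) else 0)"
      by (rule sum.cong) (auto simp: ncmonom_def)
    then show ?thesis by (simp add: Cons ncmult_split_first ncmonom_def nc_lmult_def)
  qed
qed

lemma ncmult_nc_lmult_left: "ncmult (nc_lmult x R) M = nc_lmult x (ncmult R M)"
proof
  fix w
  show "ncmult (nc_lmult x R) M w = nc_lmult x (ncmult R M) w"
    by (cases w) (simp_all only: ncmult_split_first, auto simp: ncmult_def nc_lmult_def)
qed

lemma ncmult_nc_rho_mult_left: "ncmult (nc_rho_mult R) M = nc_rho_mult (ncmult R M)"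
  by (simp add: nc_rho_mult_def ncmult_ncsub_left ncmult_nc_lmult_left)

lemma ncmult_ncrho_left: "ncmult ncrho M = nc_rho_mult M"
  by (simp add: ncrho_def ncpi_eq_ncmonom ncmult_ncsub_left ncmult_ncmonom_letter
      flip: ncone_eq_ncmonom) (simp add: ncmult_ncone_left nc_rho_mult_def)

lemma ncmult_ncpow_ncpi_left: "ncmult (ncpow ncpi k) M = (nc_lmult LPi ^^ k) M"
  by (induction k) (simp_all add: ncpow_def ncmult_ncone_left ncpi_eq_ncmonom
      ncmult_ncmonom_letter ncmult_nc_lmult_left)

lemma ncmult_ncpow_ncy_left: "ncmult (ncpow ncy k) M = (nc_lmult LY ^^ k) M"
  by (induction k) (simp_all add: ncpow_def ncmult_ncone_left ncy_eq_ncmonom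
      ncmult_ncmonom_letter ncmult_nc_lmult_left)

lemma ncmult_ncpow_ncrho_left: "ncmult (ncpow ncrho k) M = (nc_rho_mult ^^ k) M"
  by (induction k) (simp_all add: ncpow_def ncmult_ncone_left ncmult_ncrho_left
      ncmult_nc_rho_mult_left)

lemma nc_lmult_ncmonom: "nc_lmult x (ncmonom v) = ncmonom (x # v)"
  unfolding nc_lmult_def ncmonom_def by (auto split: list.splits)

lemma funpow_nc_lmult_ncmonom: "(nc_lmult x ^^ k) (ncmonom v) = ncmonom (replicate k x @ v)"
  by (induction k) (simp_all add: nc_lmult_ncmonom)

lemma funpow_nc_lmult_nc_rho_mult:
  "(nc_lmult LPi ^^ k) (nc_rho_mult M) = nc_rho_mult ((nc_lmult LPi ^^ k) M)"
proof -
  have "nc_lmult x (ncsub A B) = ncsub (nc_lmult x A) (nc_lmult x B)" for x A B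
    unfolding nc_lmult_def ncsub_def by (auto split: list.splits)
  then show ?thesis by (induction k) (simp_all add: nc_rho_mult_def)
qed

lemma ncsupp_ncmonom: "ncsupp (ncmonom v) = {v}"
  by (auto simp: ncsupp_def ncmonom_def)

lemma ncsupp_nc_lmult: "ncsupp (nc_lmult x M) = Cons x ` ncsupp M"
proof -
  have "nc_lmult x M w \<noteq> 0 \<longleftrightarrow> (\<exists>w'. w = x # w' \<and> M w' \<noteq> 0)" for w
    by (cases w) (auto simp: nc_lmult_def)
  then show ?thesis by (auto simp: ncsupp_def)
qed

lemma ncsupp_ncsub: "ncsupp (ncsub A B) \<subseteq> ncsupp A \<union> ncsupp B"
  by (auto simp: ncsupp_def ncsub_def)

lemma ncsupp_nc_rho_mult: "ncsupp (nc_rho_mult M) \<subseteq> Cons LPi ` ncsupp M \<union> ncsupp M"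
  using ncsupp_ncsub[of "nc_lmult LPi M" M] by (simp add: nc_rho_mult_def ncsupp_nc_lmult)

lemma ncpoly_fin_ncmonom: "ncpoly_fin (ncmonom v)"
  by (simp add: ncpoly_fin_iff_finite_ncsupp ncsupp_ncmonom)

lemma ncpoly_fin_nc_lmult: "ncpoly_fin M \<Longrightarrow> ncpoly_fin (nc_lmult x M)"
  by (simp add: ncpoly_fin_iff_finite_ncsupp ncsupp_nc_lmult)

lemma ncpoly_fin_nc_rho_mult: "ncpoly_fin M \<Longrightarrow> ncpoly_fin (nc_rho_mult M)"
  by (simp add: ncpoly_fin_iff_finite_ncsupp finite_subset[OF ncsupp_nc_rho_mult])

lemma ncpoly_fin_funpow_nc_lmult: "ncpoly_fin M \<Longrightarrow> ncpoly_fin ((nc_lmult x ^^ k) M)"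
  by (induction k) (simp_all add: ncpoly_fin_nc_lmult)

lemma ncpoly_fin_funpow_nc_rho_mult: "ncpoly_fin M \<Longrightarrow> ncpoly_fin ((nc_rho_mult ^^ k) M)"
  by (induction k) (simp_all add: ncpoly_fin_nc_rho_mult)

section \<open>Truncated evaluation and its duality\<close>

definition shift_sum :: "nat \<Rightarrow> complex \<Rightarrow> nat \<Rightarrow> (nat \<Rightarrow> complex) \<Rightarrow> nat \<Rightarrow> complex" where
  "shift_sum N q T h = (\<lambda>S. \<Sum>m=1..N. q ^ (T * m) * h (S + m))"

definition pi_op :: "nat \<Rightarrow> complex \<Rightarrow> (nat \<Rightarrow> complex) \<Rightarrow> nat \<Rightarrow> complex" where
  "pi_op N q h = (\<lambda>S. h S + shift_sum N q 0 h S)"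

definition y_op :: "nat \<Rightarrow> complex \<Rightarrow> (nat \<Rightarrow> complex) \<Rightarrow> nat \<Rightarrow> complex" where
  "y_op N q h = (\<lambda>S. (\<Sum>u=1..N. q ^ (S * u)) * h S)"

fun letter_op :: "nat \<Rightarrow> complex \<Rightarrow> letter \<Rightarrow> (nat \<Rightarrow> complex) \<Rightarrow> nat \<Rightarrow> complex" where
  "letter_op N q LPi = pi_op N q"
| "letter_op N q LY = y_op N q"

definition word_op :: "nat \<Rightarrow> complex \<Rightarrow> letter list \<Rightarrow> (nat \<Rightarrow> complex) \<Rightarrow> nat \<Rightarrow> complex" where
  "word_op N q w = foldr (letter_op N q) w"

definition trunc_eval :: "nat \<Rightarrow> complex \<Rightarrow> ncpoly \<Rightarrow> (nat \<Rightarrow> complex) \<Rightarrow> nat \<Rightarrow> complex" where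
  "trunc_eval N q p h = (\<lambda>S. \<Sum>w\<in>ncsupp p. of_rat (p w) * word_op N q w h S)"

lemma word_op_Nil [simp]: "word_op N q [] h = h"
  and word_op_Cons [simp]: "word_op N q (x # w) h = letter_op N q x (word_op N q w h)"
  by (simp_all add: word_op_def)

lemma word_op_append: "word_op N q (u @ v) h = word_op N q u (word_op N q v h)"
  by (simp add: word_op_def)

lemma shift_sum_sum:
  "shift_sum N q T (\<lambda>S. \<Sum>w\<in>F. c w * g w S) = (\<lambda>S. \<Sum>w\<in>F. c w * shift_sum N q T (g w) S)"
  unfolding shift_sum_def by (simp add: sum_distrib_left mult.left_commute) (subst sum.swap, rule refl)

lemma y_op_sum:
  "y_op N q (\<lambda>S. \<Sum>w\<in>F. c w * g w S) = (\<lambda>S. \<Sum>w\<in>F. c w * y_op N q (g w) S)"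
  by (simp add: y_op_def sum_distrib_left mult.left_commute)

lemma letter_op_sum:
  "letter_op N q x (\<lambda>S. \<Sum>w\<in>F. c w * g w S) = (\<lambda>S. \<Sum>w\<in>F. c w * letter_op N q x (g w) S)"
proof (cases x)
  case LPi
  then show ?thesis by (simp add: pi_op_def shift_sum_sum sum.distrib algebra_simps)
next
  case LY
  then show ?thesis by (simp add: y_op_sum)
qed

lemma trunc_eval_superset:
  assumes "finite A" "ncsupp p \<subseteq> A"
  shows "trunc_eval N q p h S = (\<Sum>w\<in>A. of_rat (p w) * word_op N q w h S)"
  unfolding trunc_eval_def by (rule sum.mono_neutral_left) (use assms in \<open>auto simp: ncsupp_def\<close>)

lemma trunc_eval_ncsub:
  assumes "ncpoly_fin A" "ncpoly_fin B"
  shows "trunc_eval N q (ncsub A B) h = (\<lambda>S. trunc_eval N q A h S - trunc_eval N q B h S)"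
proof
  fix S
  let ?U = "ncsupp A \<union> ncsupp B"
  have U: "finite ?U" using assms by (simp add: ncpoly_fin_iff_finite_ncsupp)
  have "trunc_eval N q (ncsub A B) h S = (\<Sum>w\<in>?U. of_rat (ncsub A B w) * word_op N q w h S)"
    by (rule trunc_eval_superset[OF U ncsupp_ncsub])
  also have "\<dots> = (\<Sum>w\<in>?U. of_rat (A w) * word_op N q w h S)
                - (\<Sum>w\<in>?U. of_rat (B w) * word_op N q w h S)"
    by (simp add: ncsub_def of_rat_diff algebra_simps sum_subtractf)
  also have "\<dots> = trunc_eval N q A h S - trunc_eval N q B h S"
    by (simp add: trunc_eval_superset[OF U])
  finally show "trunc_eval N q (ncsub A B) h S = trunc_eval N q A h S - trunc_eval N q B h S" .
qed

lemma trunc_eval_ncmonom: "trunc_eval N q (ncmonom v) h = word_op N q v h"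
  by (simp add: trunc_eval_def ncsupp_ncmonom) (simp add: ncmonom_def)

lemma trunc_eval_ncone: "trunc_eval N q ncone h = h"
  by (simp add: ncone_eq_ncmonom trunc_eval_ncmonom)

lemma trunc_eval_nc_lmult:
  assumes "ncpoly_fin M"
  shows "trunc_eval N q (nc_lmult x M) h = letter_op N q x (trunc_eval N q M h)"
proof -
  have "trunc_eval N q (nc_lmult x M) h
      = (\<lambda>S. \<Sum>w\<in>Cons x ` ncsupp M. of_rat (nc_lmult x M w) * word_op N q w h S)"
    by (simp add: trunc_eval_def ncsupp_nc_lmult)
  also have "\<dots> = (\<lambda>S. \<Sum>w\<in>ncsupp M. of_rat (M w) * letter_op N q x (word_op N q w h) S)"
    by (simp add: sum.reindex nc_lmult_def)
  also have "\<dots> = letter_op N q x (trunc_eval N q M h)"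
    unfolding trunc_eval_def letter_op_sum ..
  finally show ?thesis .
qed

lemma trunc_eval_nc_rho_mult:
  "ncpoly_fin M \<Longrightarrow> trunc_eval N q (nc_rho_mult M) h = shift_sum N q 0 (trunc_eval N q M h)"
  by (simp add: nc_rho_mult_def trunc_eval_ncsub ncpoly_fin_nc_lmult trunc_eval_nc_lmult pi_op_def)

lemma trunc_eval_funpow_nc_lmult:
  "ncpoly_fin M \<Longrightarrow> trunc_eval N q ((nc_lmult x ^^ k) M) h = (letter_op N q x ^^ k) (trunc_eval N q M h)"
  by (induction k) (simp_all add: trunc_eval_nc_lmult ncpoly_fin_funpow_nc_lmult)

lemma trunc_eval_funpow_nc_rho_mult:
  "ncpoly_fin M \<Longrightarrow> trunc_eval N q ((nc_rho_mult ^^ k) M) h = (shift_sum N q 0 ^^ k) (trunc_eval N q M h)"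
  by (induction k) (simp_all add: trunc_eval_nc_rho_mult ncpoly_fin_funpow_nc_rho_mult)

text \<open>\<open>True\<close> stands for \<open>\<rho>\<close> and \<open>False\<close> for \<open>y\<close>. The weight \<open>q ^ (T m)\<close> introduces the
  variable \<open>T\<close> that duality exchanges with \<open>S\<close>; \<open>T = 0\<close> gives the truncated evaluation.\<close>
definition rho_y_op :: "nat \<Rightarrow> complex \<Rightarrow> bool list \<Rightarrow> nat \<Rightarrow> (nat \<Rightarrow> complex) \<Rightarrow> nat \<Rightarrow> complex" where
  "rho_y_op N q c T = foldr (\<lambda>b. if b then shift_sum N q T else y_op N q) c"

definition rho_y_value :: "nat \<Rightarrow> complex \<Rightarrow> bool list \<Rightarrow> nat \<Rightarrow> nat \<Rightarrow> complex" where
  "rho_y_value N q c S T = rho_y_op N q c T (\<lambda>_. 1) S"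

lemma rho_y_op_Nil [simp]: "rho_y_op N q [] T h = h"
  and rho_y_op_Cons [simp]:
    "rho_y_op N q (b # c) T h = (if b then shift_sum N q T else y_op N q) (rho_y_op N q c T h)"
  by (simp_all add: rho_y_op_def)

lemma rho_y_op_append: "rho_y_op N q (c @ d) T h = rho_y_op N q c T (rho_y_op N q d T h)"
  by (simp add: rho_y_op_def)

lemma rho_y_op_replicate:
  "rho_y_op N q (replicate k b @ d) T h = ((if b then shift_sum N q T else y_op N q) ^^ k) (rho_y_op N q d T h)"
  by (induction k) simp_all

lemma rho_y_op_sum:
  "rho_y_op N q c T (\<lambda>S. \<Sum>u\<in>F. k u * g u S) = (\<lambda>S. \<Sum>u\<in>F. k u * rho_y_op N q c T (g u) S)"
  by (induction c) (simp_all add: shift_sum_sum y_op_sum)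

lemma rho_y_op_scale: "rho_y_op N q c T (\<lambda>S. k * h S) = (\<lambda>S. k * rho_y_op N q c T h S)"
  using rho_y_op_sum[where F = "{()}" and k = "\<lambda>_. k" and g = "\<lambda>_. h"] by simp

lemma rho_y_op_exp:
  "rho_y_op N q c T (\<lambda>S. q ^ (S * u) * h S) = (\<lambda>S. q ^ (S * u) * rho_y_op N q c (T + u) h S)"
proof (induction c)
  case (Cons b c)
  have "q ^ (T * m) * q ^ ((S + m) * u) = q ^ (S * u) * q ^ ((T + u) * m)" for S m
    by (simp add: power_add algebra_simps)
  then show ?case using Cons
    by (auto simp: shift_sum_def y_op_def sum_distrib_left mult.assoc mult.left_commute
        simp flip: mult.assoc)
qed simp

lemma rho_y_value_snoc_y:
  "rho_y_value N q (c @ [False]) S T = (\<Sum>u=1..N. q ^ (S * u) * rho_y_value N q c S (T + u))"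
proof -
  have "rho_y_value N q (c @ [False]) S T = rho_y_op N q c T (\<lambda>S. \<Sum>u=1..N. 1 * (q ^ (S * u) * 1)) S"
    by (simp add: rho_y_value_def rho_y_op_append y_op_def sum_distrib_right)
  then show ?thesis
    by (simp only: rho_y_op_sum rho_y_op_exp rho_y_value_def) simp
qed

lemma rho_y_value_snoc_rho:
  "rho_y_value N q (c @ [True]) S T = (\<Sum>m=1..N. q ^ (T * m)) * rho_y_value N q c S T"
proof -
  have "rho_y_value N q (c @ [True]) S T = rho_y_op N q c T (\<lambda>S. (\<Sum>m=1..N. q ^ (T * m)) * 1) S"
    by (simp add: rho_y_value_def rho_y_op_append shift_sum_def)
  then show ?thesis by (simp only: rho_y_op_scale rho_y_value_def)
qed

text \<open>Appending \<open>\<rho>\<close> multiplies the value by \<open>\<Sum>m. q ^ (T m)\<close> and prepending \<open>y\<close> multiplies it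
  by \<open>\<Sum>u. q ^ (S u)\<close>; appending \<open>y\<close> and prepending \<open>\<rho>\<close> give \<open>\<Sum>u. q ^ (S u)\<close> times the value at
  \<open>T + u\<close> and \<open>\<Sum>m. q ^ (T m)\<close> times the value at \<open>S + m\<close>. Swapping \<open>S\<close> and \<open>T\<close> thus
  exchanges the recursions at the two ends of the word.\<close>
lemma rho_y_value_dual: "rho_y_value N q (rev (map Not c)) S T = rho_y_value N q c T S"
proof (induction c arbitrary: S T)
  case (Cons b c)
  then show ?case
    by (cases b) (simp_all add: rho_y_value_snoc_y rho_y_value_snoc_rho,
        simp_all add: rho_y_value_def shift_sum_def y_op_def)
qed (simp add: rho_y_value_def)

section \<open>Monomials in \<open>\<rho>\<close> and \<open>y\<close> lie in the span of the \<open>W(s)\<close>\<close>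

definition rho_y_monomial :: "(nat \<times> nat) list \<Rightarrow> ncpoly" where
  "rho_y_monomial ps = ncprod (concat (map (\<lambda>(k, m). [ncpow ncrho k, ncpow ncy m]) ps))"

definition rho_y_code :: "(nat \<times> nat) list \<Rightarrow> bool list" where
  "rho_y_code ps = concat (map (\<lambda>(k, m). replicate k True @ replicate m False) ps)"

lemma rho_y_monomial_Nil: "rho_y_monomial [] = ncone"
  by (simp add: rho_y_monomial_def ncprod_def)

lemma rho_y_monomial_Cons:
  "rho_y_monomial ((k, m) # ps) = (nc_rho_mult ^^ k) ((nc_lmult LY ^^ m) (rho_y_monomial ps))"
  by (simp add: rho_y_monomial_def ncprod_def ncmult_ncpow_ncrho_left ncmult_ncpow_ncy_left)

lemma ncpoly_fin_rho_y_monomial: "ncpoly_fin (rho_y_monomial ps)"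
proof (induction ps)
  case Nil
  then show ?case by (simp add: rho_y_monomial_Nil ncone_eq_ncmonom ncpoly_fin_ncmonom)
next
  case (Cons p ps)
  then show ?case
    by (cases p) (simp add: rho_y_monomial_Cons ncpoly_fin_funpow_nc_rho_mult
        ncpoly_fin_funpow_nc_lmult)
qed

lemma trunc_eval_rho_y_monomial:
  "trunc_eval N q (rho_y_monomial ps) h = rho_y_op N q (rho_y_code ps) 0 h"
proof (induction ps)
  case Nil
  then show ?case by (simp add: rho_y_monomial_Nil rho_y_code_def trunc_eval_ncone)
next
  case (Cons p ps)
  obtain k m where "p = (k, m)" by fastforce
  with Cons show ?case
    by (simp add: rho_y_monomial_Cons rho_y_code_def trunc_eval_funpow_nc_rho_mult
        trunc_eval_funpow_nc_lmult ncpoly_fin_funpow_nc_lmult ncpoly_fin_rho_y_monomial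
        rho_y_op_replicate)
qed

lemma rho_y_code_dual: "rev (map Not (rho_y_code ps)) = rho_y_code (rev (map prod.swap ps))"
  by (induction ps) (auto simp: rho_y_code_def rev_map)

lemma ncprod_eq_rho_y_monomial:
  assumes "a \<ge> 1"
  shows "ncprod ([ncpow (ncsub ncpi ncone) (a - 1), ncrho, ncpow ncy b]
            @ concat (map (\<lambda>j. [ncpow (ncsub ncpi ncone) (A j), ncpow ncy (B j)]) js))
         = rho_y_monomial ((a, b) # map (\<lambda>j. (A j, B j)) js)"
proof -
  have a: "a = Suc (a - 1)" using assms by simp
  have "ncprod (concat (map (\<lambda>j. [ncpow (ncsub ncpi ncone) (A j), ncpow ncy (B j)]) js))
      = rho_y_monomial (map (\<lambda>j. (A j, B j)) js)"
    by (simp add: rho_y_monomial_def ncrho_def comp_def)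
  then show ?thesis
    by (subst a) (simp add: rho_y_monomial_Cons ncprod_def ncmult_ncpow_ncrho_left ncmult_ncrho_left
        ncmult_ncpow_ncy_left funpow_swap1 flip: ncrho_def)
qed

lemma ncprod_upt_eq_rho_y_monomial:
  assumes "l \<ge> 1" "A 1 \<ge> 1"
  shows "ncprod ([ncpow (ncsub ncpi ncone) (A 1 - 1), ncrho, ncpow ncy (B 1)]
            @ concat (map (\<lambda>j. [ncpow (ncsub ncpi ncone) (A j), ncpow ncy (B j)]) [2..<l+1]))
         = rho_y_monomial (map (\<lambda>j. (A j, B j)) [1..<l+1])"
proof -
  have "[1..<l+1] = 1 # [Suc 1..<l+1]"
    using assms(1) by (intro upt_conv_Cons) simp
  then show ?thesis
    by (simp only: Suc_1 list.map ncprod_eq_rho_y_monomial[OF assms(2)])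
qed

lemma ncprod_rev_upt_eq_rho_y_monomial:
  assumes "l \<ge> 1" "B l \<ge> 1"
  shows "ncprod ([ncpow (ncsub ncpi ncone) (B l - 1), ncrho, ncpow ncy (A l)]
            @ concat (map (\<lambda>j. [ncpow (ncsub ncpi ncone) (B j), ncpow ncy (A j)]) (rev [1..<l])))
         = rho_y_monomial (rev (map prod.swap (map (\<lambda>j. (A j, B j)) [1..<l+1])))"
proof -
  have "rev [1..<l+1] = l # rev [1..<l]"
    using assms(1) by simp
  then have "rev (map prod.swap (map (\<lambda>j. (A j, B j)) [1..<l+1]))
      = (B l, A l) # map (\<lambda>j. (B j, A j)) (rev [1..<l])"
    by (simp only: rev_map map_map list.map) (simp add: comp_def del: upt_Suc)
  then show ?thesis
    by (simp only: ncprod_eq_rho_y_monomial[OF assms(2)])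
qed

definition pi_y_word :: "nat list \<Rightarrow> letter list" where
  "pi_y_word t = concat (map (\<lambda>k. replicate k LPi @ [LY]) t)"

lemma pi_y_word_Nil [simp]: "pi_y_word [] = []"
  and pi_y_word_Cons: "pi_y_word (k # t) = replicate k LPi @ LY # pi_y_word t"
  by (simp_all add: pi_y_word_def)

lemma inj_pi_y_word: "inj pi_y_word"
proof -
  have rep: "replicate k LPi @ LY # u = replicate k' LPi @ LY # u' \<Longrightarrow> k = k' \<and> u = u'"
    for k k' u u'
    by (induction k arbitrary: k') (case_tac k'; auto)+
  have "pi_y_word t = pi_y_word t' \<Longrightarrow> t = t'" for t t'
    by (induction t arbitrary: t') (case_tac t'; auto simp: pi_y_word_Cons dest!: rep)+
  then show ?thesis by (rule injI)
qed

lemma Wword_Suc: "Wword (Suc a # t) = nc_rho_mult (ncmonom (pi_y_word (a # t)))"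
proof -
  have tail: "ncprod (concat (map (\<lambda>k. [ncpow ncpi k, ncy]) t)) = ncmonom (pi_y_word t)"
    by (induction t) (simp_all add: ncprod_def ncone_eq_ncmonom ncmult_ncpow_ncpi_left
        ncy_eq_ncmonom ncmult_ncmonom_letter nc_lmult_ncmonom funpow_nc_lmult_ncmonom pi_y_word_Cons)
  have "Wword (Suc a # t)
      = ncmult (ncpow ncpi a) (ncmult ncrho (ncmult ncy (ncprod (concat (map (\<lambda>k. [ncpow ncpi k, ncy]) t)))))"
    by (simp add: Wword_def ncprod_def)
  also have "\<dots> = (nc_lmult LPi ^^ a) (nc_rho_mult (nc_lmult LY (ncmonom (pi_y_word t))))"
    unfolding tail by (simp only: ncmult_ncpow_ncpi_left ncmult_ncrho_left ncy_eq_ncmonom ncmult_ncmonom_letter)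
  finally show ?thesis
    by (simp add: funpow_nc_lmult_nc_rho_mult nc_lmult_ncmonom funpow_nc_lmult_ncmonom pi_y_word_Cons)
qed

definition y_final :: "letter list set" where
  "y_final = {w. w \<noteq> [] \<and> last w = LY}"

lemma y_final_subset_pi_y_word: "y_final \<subseteq> pi_y_word ` {t. t \<noteq> []}"
proof
  fix w assume "w \<in> y_final"
  then show "w \<in> pi_y_word ` {t. t \<noteq> []}"
  proof (induction w)
    case (Cons x w)
    show ?case
    proof (cases "w = []")
      case True
      with Cons.prems have "x # w = pi_y_word [0]" by (simp add: y_final_def pi_y_word_Cons)
      then show ?thesis by blast
    next
      case False
      with Cons obtain k t where t: "w = pi_y_word (k # t)"
        by (force simp: y_final_def neq_Nil_conv)
      show ?thesis
      proof (cases x)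
        case LPi
        then have "x # w = pi_y_word (Suc k # t)" by (simp add: t pi_y_word_Cons)
        then show ?thesis by blast
      next
        case LY
        then have "x # w = pi_y_word (0 # k # t)" by (simp add: t pi_y_word_Cons)
        then show ?thesis by blast
      qed
    qed
  qed (simp add: y_final_def)
qed

lemma ncsupp_nc_lmult_y_final:
  "ncsupp M \<subseteq> y_final \<Longrightarrow> ncsupp (nc_lmult x M) \<subseteq> y_final"
  by (auto simp: ncsupp_nc_lmult y_final_def)

lemma ncsupp_nc_lmult_LY_y_final:
  "ncsupp M \<subseteq> insert [] y_final \<Longrightarrow> ncsupp (nc_lmult LY M) \<subseteq> y_final"
  by (auto simp: ncsupp_nc_lmult y_final_def)

lemma ncsupp_funpow_nc_rho_mult_y_final:
  "ncsupp M \<subseteq> y_final \<Longrightarrow> ncsupp ((nc_rho_mult ^^ k) M) \<subseteq> y_final"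
proof (induction k)
  case (Suc k)
  let ?M = "(nc_rho_mult ^^ k) M"
  have "Cons LPi ` ncsupp ?M \<union> ncsupp ?M \<subseteq> y_final"
    using Suc by (auto simp: y_final_def)
  then show ?case by (simp add: order_trans[OF ncsupp_nc_rho_mult])
qed simp

lemma ncsupp_funpow_nc_lmult_LY_y_final:
  assumes "ncsupp M \<subseteq> insert [] y_final" "m \<ge> 1"
  shows "ncsupp ((nc_lmult LY ^^ m) M) \<subseteq> y_final"
  using assms(2)
proof (induction m rule: dec_induct)
  case base
  then show ?case using assms(1) by (simp add: ncsupp_nc_lmult_LY_y_final)
next
  case (step m)
  then show ?case by (simp add: ncsupp_nc_lmult_y_final)
qed

lemma ncsupp_rho_y_monomial:
  "\<forall>(k, m)\<in>set ps. m \<ge> 1 \<Longrightarrow> ncsupp (rho_y_monomial ps) \<subseteq> insert [] y_final"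
proof (induction ps)
  case Nil
  then show ?case by (simp add: rho_y_monomial_Nil ncone_eq_ncmonom ncsupp_ncmonom)
next
  case (Cons p ps)
  obtain k m where p: "p = (k, m)" by fastforce
  have "ncsupp (rho_y_monomial ps) \<subseteq> insert [] y_final" "m \<ge> 1"
    using Cons by (auto simp: p)
  then have "ncsupp ((nc_lmult LY ^^ m) (rho_y_monomial ps)) \<subseteq> y_final"
    by (rule ncsupp_funpow_nc_lmult_LY_y_final)
  then have "ncsupp (rho_y_monomial (p # ps)) \<subseteq> y_final"
    unfolding p rho_y_monomial_Cons by (rule ncsupp_funpow_nc_rho_mult_y_final)
  then show ?case by blast
qed

definition Wword_comb :: "(nat list \<Rightarrow> rat) \<Rightarrow> ncpoly" where
  "Wword_comb c = (\<lambda>w. \<Sum>s\<in>{s. c s \<noteq> 0}. c s * Wword s w)"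

definition Wword_coeffs :: "(nat list \<Rightarrow> rat) \<Rightarrow> bool" where
  "Wword_coeffs c \<longleftrightarrow> finite {s. c s \<noteq> 0} \<and> (\<forall>s. c s \<noteq> 0 \<longrightarrow> admissible s)"

lemma ncpoly_expansion:
  assumes "finite A" "ncsupp Z \<subseteq> A"
  shows "Z = (\<lambda>w. \<Sum>v\<in>A. Z v * ncmonom v w)"
proof
  fix w
  have "(\<Sum>v\<in>A. Z v * ncmonom v w) = (\<Sum>v\<in>A. if v = w then Z w else 0)"
    by (rule sum.cong) (auto simp: ncmonom_def)
  also have "\<dots> = (if w \<in> A then Z w else 0)"
    using assms(1) by (simp add: sum.delta)
  finally have "(\<Sum>v\<in>A. Z v * ncmonom v w) = (if w \<in> A then Z w else 0)" .
  then show "Z w = (\<Sum>v\<in>A. Z v * ncmonom v w)"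
    using assms(2) by (auto simp: ncsupp_def)
qed

lemma nc_rho_mult_sum:
  "nc_rho_mult (\<lambda>w. \<Sum>x\<in>F. k x * g x w) = (\<lambda>w. \<Sum>x\<in>F. k x * nc_rho_mult (g x) w)"
  by (rule ext, case_tac w)
    (auto simp: nc_rho_mult_def ncsub_def nc_lmult_def sum_subtractf sum_negf algebra_simps)

text \<open>Each support word of \<open>Z\<close> is \<open>\<pi> ^ k y \<dots>\<close>, and \<open>\<rho> \<pi> ^ k y \<dots> = W(k + 1, \<dots>)\<close>.\<close>
lemma nc_rho_mult_in_Wword_span:
  assumes fin: "ncpoly_fin Z" and supp: "ncsupp Z \<subseteq> y_final"
  shows "\<exists>c. Wword_coeffs c \<and> nc_rho_mult Z = Wword_comb c"
proof -
  define T where "T = {t. t \<noteq> [] \<and> Z (pi_y_word t) \<noteq> 0}"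
  define \<sigma> where "\<sigma> t = Suc (hd t) # tl t" for t :: "nat list"
  define c where "c s = (if admissible s then Z (pi_y_word ((hd s - 1) # tl s)) else 0)" for s
  have suppZ: "ncsupp Z = pi_y_word ` T"
    using supp y_final_subset_pi_y_word by (auto simp: T_def ncsupp_def)
  have finT: "finite T"
    using fin by (simp add: ncpoly_fin_iff_finite_ncsupp suppZ finite_image_iff
        inj_on_subset[OF inj_pi_y_word])
  have inj\<sigma>: "inj_on \<sigma> T"
    by (rule inj_onI) (auto simp: \<sigma>_def T_def neq_Nil_conv)
  have c\<sigma>: "c (\<sigma> t) = Z (pi_y_word t)" if "t \<in> T" for t
    using that by (auto simp: c_def \<sigma>_def T_def admissible_def neq_Nil_conv)
  have W\<sigma>: "Wword (\<sigma> t) = nc_rho_mult (ncmonom (pi_y_word t))" if "t \<in> T" for t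
    using that by (cases t) (simp_all add: T_def \<sigma>_def Wword_Suc)
  have supp_c: "{s. c s \<noteq> 0} = \<sigma> ` T"
  proof (intro equalityI subsetI)
    fix s assume "s \<in> {s. c s \<noteq> 0}"
    then have "admissible s" "(hd s - 1) # tl s \<in> T" by (auto simp: c_def T_def split: if_splits)
    moreover from \<open>admissible s\<close> have "s = \<sigma> ((hd s - 1) # tl s)"
      by (cases s) (auto simp: admissible_def \<sigma>_def)
    ultimately show "s \<in> \<sigma> ` T" by blast
  qed (use c\<sigma> in \<open>auto simp: T_def\<close>)
  have "nc_rho_mult Z = nc_rho_mult (\<lambda>w. \<Sum>t\<in>T. Z (pi_y_word t) * ncmonom (pi_y_word t) w)"
    using ncpoly_expansion[of "pi_y_word ` T" Z] finT suppZ
    by (simp add: sum.reindex inj_on_subset[OF inj_pi_y_word])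
  also have "\<dots> = (\<lambda>w. \<Sum>t\<in>T. c (\<sigma> t) * Wword (\<sigma> t) w)"
    unfolding nc_rho_mult_sum
    by (intro ext sum.cong refl) (simp add: c\<sigma> W\<sigma>)
  also have "\<dots> = Wword_comb c"
    by (simp add: Wword_comb_def supp_c sum.reindex[OF inj\<sigma>])
  finally have "nc_rho_mult Z = Wword_comb c" .
  moreover have "Wword_coeffs c"
    using finT unfolding Wword_coeffs_def supp_c by (auto simp: c_def split: if_splits)
  ultimately show ?thesis by blast
qed

lemma rho_y_monomial_in_Wword_span:
  assumes "k \<ge> 1" "m \<ge> 1" "\<forall>(k, m)\<in>set ps. m \<ge> 1"
  shows "\<exists>c. Wword_coeffs c \<and> rho_y_monomial ((k, m) # ps) = Wword_comb c"
proof -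
  let ?Z = "(nc_rho_mult ^^ (k - 1)) ((nc_lmult LY ^^ m) (rho_y_monomial ps))"
  have "rho_y_monomial ((k, m) # ps) = nc_rho_mult ?Z"
    using assms(1) by (cases k) (simp_all add: rho_y_monomial_Cons funpow_Suc_right)
  moreover have "ncpoly_fin ?Z"
    by (simp add: ncpoly_fin_funpow_nc_rho_mult ncpoly_fin_funpow_nc_lmult ncpoly_fin_rho_y_monomial)
  moreover have "ncsupp ?Z \<subseteq> y_final"
    using assms by (intro ncsupp_funpow_nc_rho_mult_y_final ncsupp_funpow_nc_lmult_LY_y_final
        ncsupp_rho_y_monomial) auto
  ultimately show ?thesis using nc_rho_mult_in_Wword_span by metis
qed

section \<open>Convergence of the truncated evaluation of \<open>W(s)\<close>\<close>

definition tuple_box :: "nat \<Rightarrow> nat \<Rightarrow> nat list set" where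
  "tuple_box N d = {v. length v = d \<and> set v \<subseteq> {1..N}}"

lemma tuple_box_0: "tuple_box N 0 = {[]}"
  by (auto simp: tuple_box_def)

lemma tuple_box_Suc: "tuple_box N (Suc d) = (\<lambda>(u, v). u # v) ` ({1..N} \<times> tuple_box N d)"
proof
  show "tuple_box N (Suc d) \<subseteq> (\<lambda>(u, v). u # v) ` ({1..N} \<times> tuple_box N d)"
  proof
    fix w assume "w \<in> tuple_box N (Suc d)"
    then obtain u v where "w = u # v" "u \<in> {1..N}" "v \<in> tuple_box N d"
      by (cases w) (auto simp: tuple_box_def)
    then show "w \<in> (\<lambda>(u, v). u # v) ` ({1..N} \<times> tuple_box N d)" by force
  qed
qed (auto simp: tuple_box_def)

lemma finite_tuple_box: "finite (tuple_box N d)"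
  by (induction d) (simp_all add: tuple_box_0 tuple_box_Suc)

lemma sum_tuple_box_Suc: "(\<Sum>v\<in>tuple_box N (Suc d). f v) = (\<Sum>u=1..N. \<Sum>v\<in>tuple_box N d. f (u # v))"
proof -
  have "inj_on (\<lambda>(u, v). u # v) ({1..N} \<times> tuple_box N d)"
    by (auto intro: inj_onI)
  then show ?thesis
    by (simp add: tuple_box_Suc sum.reindex case_prod_unfold sum.cartesian_product)
qed

definition qgeom :: "nat \<Rightarrow> complex \<Rightarrow> nat \<Rightarrow> complex" where
  "qgeom N q K = (\<Sum>m=1..N. q ^ (K * m))"

fun trunc_weight :: "nat \<Rightarrow> complex \<Rightarrow> nat list \<Rightarrow> nat list \<Rightarrow> complex" where
  "trunc_weight N q (a # s) (u # v) = (1 + qgeom N q (u + sum_list v)) ^ a * trunc_weight N q s v"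
| "trunc_weight N q _ _ = 1"

lemma shift_sum_exp:
  "shift_sum N q 0 (\<lambda>S. \<Sum>x\<in>F. q ^ (S * K x) * c x)
   = (\<lambda>S. \<Sum>x\<in>F. q ^ (S * K x) * (qgeom N q (K x) * c x))"
proof
  fix S
  have "q ^ ((S + m) * K x) = q ^ (S * K x) * q ^ (K x * m)" for m x
    by (simp add: power_add algebra_simps)
  then show "shift_sum N q 0 (\<lambda>S. \<Sum>x\<in>F. q ^ (S * K x) * c x) S
      = (\<Sum>x\<in>F. q ^ (S * K x) * (qgeom N q (K x) * c x))"
    by (simp add: shift_sum_def qgeom_def sum_distrib_left sum_distrib_right mult.assoc
        sum.swap[of _ F])
qed

lemma pi_op_exp:
  "pi_op N q (\<lambda>S. \<Sum>x\<in>F. q ^ (S * K x) * c x)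
   = (\<lambda>S. \<Sum>x\<in>F. q ^ (S * K x) * ((1 + qgeom N q (K x)) * c x))"
  unfolding pi_op_def shift_sum_exp by (rule ext) (simp add: sum.distrib algebra_simps)

lemma funpow_pi_op_exp:
  "(pi_op N q ^^ k) (\<lambda>S. \<Sum>x\<in>F. q ^ (S * K x) * c x)
   = (\<lambda>S. \<Sum>x\<in>F. q ^ (S * K x) * ((1 + qgeom N q (K x)) ^ k * c x))"
  by (induction k) (simp_all add: pi_op_exp mult.assoc)

lemma y_op_tuple_box:
  "y_op N q (\<lambda>S. \<Sum>v\<in>tuple_box N d. q ^ (S * sum_list v) * c v)
   = (\<lambda>S. \<Sum>v\<in>tuple_box N (Suc d). q ^ (S * sum_list v) * c (tl v))"
proof
  fix S
  show "y_op N q (\<lambda>S. \<Sum>v\<in>tuple_box N d. q ^ (S * sum_list v) * c v) S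
      = (\<Sum>v\<in>tuple_box N (Suc d). q ^ (S * sum_list v) * c (tl v))"
    by (simp add: y_op_def sum_tuple_box_Suc sum_distrib_left sum_distrib_right power_add
        add_mult_distrib2 mult.assoc sum.swap[of _ "tuple_box N d"])
qed

lemma word_op_pi_y_word:
  "word_op N q (pi_y_word s) (\<lambda>_. 1)
   = (\<lambda>S. \<Sum>v\<in>tuple_box N (length s). q ^ (S * sum_list v) * trunc_weight N q s v)"
proof (induction s)
  case Nil
  then show ?case by (simp add: tuple_box_0)
next
  case (Cons a s)
  have "word_op N q (replicate k LPi) h = (pi_op N q ^^ k) h" for k h
    by (induction k) simp_all
  then have "word_op N q (pi_y_word (a # s)) (\<lambda>_. 1)
      = (pi_op N q ^^ a) (y_op N q (word_op N q (pi_y_word s) (\<lambda>_. 1)))"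
    by (simp add: pi_y_word_Cons word_op_append)
  also have "\<dots> = (\<lambda>S. \<Sum>v\<in>tuple_box N (Suc (length s)).
      q ^ (S * sum_list v) * ((1 + qgeom N q (sum_list v)) ^ a * trunc_weight N q s (tl v)))"
    by (simp only: Cons y_op_tuple_box funpow_pi_op_exp)
  also have "\<dots> = (\<lambda>S. \<Sum>v\<in>tuple_box N (length (a # s)). q ^ (S * sum_list v) * trunc_weight N q (a # s) v)"
    by (intro ext sum.cong) (auto simp: tuple_box_def length_Suc_conv)
  finally show ?case .
qed

lemma trunc_eval_Wword:
  "trunc_eval N q (Wword (Suc a # s)) (\<lambda>_. 1) 0
   = (\<Sum>v\<in>tuple_box N (Suc (length s)). qgeom N q (sum_list v) * trunc_weight N q (a # s) v)"
  using shift_sum_exp[where K = sum_list and c = "trunc_weight N q (a # s)" and F = "tuple_box N (Suc (length s))"]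
  by (simp add: Wword_Suc trunc_eval_nc_rho_mult ncpoly_fin_ncmonom trunc_eval_ncmonom
      word_op_pi_y_word)

fun suffix_sums :: "nat list \<Rightarrow> nat list" where
  "suffix_sums [] = []"
| "suffix_sums (u # v) = (u + sum_list v) # suffix_sums v"

definition pos_tuples :: "nat \<Rightarrow> nat list set" where
  "pos_tuples d = {v. length v = d \<and> (\<forall>x\<in>set v. x > 0)}"

lemma length_suffix_sums [simp]: "length (suffix_sums v) = length v"
  by (induction v) auto

lemma hd_suffix_sums: "v \<noteq> [] \<Longrightarrow> hd (suffix_sums v) = sum_list v"
  by (cases v) auto

lemma suffix_sums_le_sum_list: "k \<in> set (suffix_sums v) \<Longrightarrow> k \<le> sum_list v"
  by (induction v) auto

lemma bij_betw_suffix_sums: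
  "bij_betw suffix_sums (pos_tuples d) {ks. length ks = d \<and> sorted_wrt (>) ks \<and> (\<forall>k\<in>set ks. k > 0)}"
    (is "bij_betw _ _ (?K d)")
proof -
  have into: "suffix_sums v \<in> ?K d" if "v \<in> pos_tuples d" for v d
    using that
    by (induction v arbitrary: d) (auto simp: pos_tuples_def dest: suffix_sums_le_sum_list)
  have onto: "\<exists>v\<in>pos_tuples d. suffix_sums v = ks" if "ks \<in> ?K d" for ks d
    using that
  proof (induction ks arbitrary: d)
    case Nil
    then show ?case by (auto simp: pos_tuples_def)
  next
    case (Cons k ks)
    then obtain v where v: "v \<in> pos_tuples (length ks)" "suffix_sums v = ks"
      by (auto simp: pos_tuples_def)
    have "k > sum_list v \<and> (k - sum_list v) # v \<in> pos_tuples d"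
      using v Cons.prems by (cases v) (auto simp: pos_tuples_def)
    then show ?case using v by (intro bexI[of _ "(k - sum_list v) # v"]) auto
  qed
  have inj: "inj suffix_sums"
  proof (rule injI)
    show "suffix_sums v = suffix_sums w \<Longrightarrow> v = w" for v w
      by (induction v arbitrary: w) (case_tac w; auto)+
  qed
  have "suffix_sums ` pos_tuples d = ?K d"
  proof (rule subset_antisym)
    show "suffix_sums ` pos_tuples d \<subseteq> ?K d"
      using into by blast
    show "?K d \<subseteq> suffix_sums ` pos_tuples d"
      using onto by blast
  qed
  then show ?thesis
    unfolding bij_betw_def using inj_on_subset[OF inj subset_UNIV] by simp
qed

fun qdenom :: "complex \<Rightarrow> nat list \<Rightarrow> nat list \<Rightarrow> complex" where
  "qdenom q (a # s) (u # v) = (1 - q ^ (u + sum_list v)) ^ a * qdenom q s v"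
| "qdenom q _ _ = 1"

definition zIII_term :: "complex \<Rightarrow> nat list \<Rightarrow> nat list \<Rightarrow> complex" where
  "zIII_term q s v = q ^ sum_list v / qdenom q s v"

lemma prod_suffix_sums_eq_qdenom:
  "length v = length s \<Longrightarrow> (\<Prod>j<length s. (1 - q ^ (suffix_sums v ! j)) ^ (s ! j)) = qdenom q s v"
proof (induction s arbitrary: v)
  case (Cons a s)
  then obtain u v' where "v = u # v'" "length v' = length s"
    by (cases v) auto
  with Cons.IH show ?case
    by (simp only: length_Cons prod.lessThan_Suc_shift) simp
qed simp

text \<open>Substituting \<open>k\<^sub>j = v\<^sub>j + \<dots> + v\<^sub>d\<close> turns the sum over \<open>k\<^sub>1 > \<dots> > k\<^sub>d > 0\<close> into one
  over positive tuples \<open>v\<close>, with numerator \<open>q ^ k\<^sub>1 = q ^ (v\<^sub>1 + \<dots> + v\<^sub>d)\<close>.\<close>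
lemma zIII_series_eq_infsum:
  assumes "s \<noteq> []"
  shows "zIII_series q s = infsum (zIII_term q s) (pos_tuples (length s))"
proof -
  have "zIII_series q s = infsum (\<lambda>v. q ^ hd (suffix_sums v)
      / (\<Prod>j<length s. (1 - q ^ (suffix_sums v ! j)) ^ (s ! j))) (pos_tuples (length s))"
    unfolding zIII_series_def by (rule infsum_reindex_bij_betw[OF bij_betw_suffix_sums, symmetric])
  also have "\<dots> = infsum (zIII_term q s) (pos_tuples (length s))"
  proof (rule infsum_cong)
    fix v assume "v \<in> pos_tuples (length s)"
    then have "length v = length s" "v \<noteq> []" using assms by (auto simp: pos_tuples_def)
    then show "q ^ hd (suffix_sums v) / (\<Prod>j<length s. (1 - q ^ (suffix_sums v ! j)) ^ (s ! j))
        = zIII_term q s v"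
      by (simp add: zIII_term_def hd_suffix_sums prod_suffix_sums_eq_qdenom)
  qed
  finally show ?thesis .
qed

lemma norm_power_le_power_of_le:
  fixes q :: "'a :: real_normed_div_algebra"
  assumes "norm q < 1" "N \<le> k"
  shows "norm (q ^ k) \<le> norm q ^ N"
  unfolding norm_power using assms by (intro power_decreasing) auto

lemma norm_qdenom_ge:
  assumes "norm q < 1" "\<forall>x\<in>set v. x > 0"
  shows "(1 - norm q) ^ sum_list s \<le> norm (qdenom q s v)"
  using assms(2)
proof (induction s arbitrary: v)
  case (Cons a s)
  have r: "0 \<le> 1 - norm q" "1 - norm q \<le> 1" using assms(1) by auto
  show ?case
  proof (cases v)
    case Nil
    then show ?thesis using r by (simp add: power_le_one)
  next
    case (Cons u v')
    with Cons.prems have pos: "u + sum_list v' > 0" "\<forall>x\<in>set v'. x > 0" by auto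
    have "1 - norm q \<le> 1 - norm (q ^ (u + sum_list v'))"
      using norm_power_le_power_of_le[OF assms(1), of 1 "u + sum_list v'"] pos by simp
    also have "\<dots> \<le> norm (1 - q ^ (u + sum_list v'))"
      using norm_triangle_ineq2[of 1 "q ^ (u + sum_list v')"] by simp
    finally have "(1 - norm q) ^ a * (1 - norm q) ^ sum_list s
        \<le> norm (1 - q ^ (u + sum_list v')) ^ a * norm (qdenom q s v')"
      using Cons.IH[OF pos(2)] r by (intro mult_mono power_mono) auto
    then show ?thesis by (simp add: Cons power_add norm_mult norm_power)
  qed
qed simp

lemma norm_zIII_term_le:
  assumes "norm q < 1" "v \<in> pos_tuples d"
  shows "norm (zIII_term q s v) \<le> norm q ^ sum_list v / (1 - norm q) ^ sum_list s"
proof -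
  have pos: "0 < (1 - norm q) ^ sum_list s" using assms(1) by simp
  moreover have "(1 - norm q) ^ sum_list s \<le> norm (qdenom q s v)"
    using assms by (intro norm_qdenom_ge) (auto simp: pos_tuples_def)
  ultimately show ?thesis
    unfolding zIII_term_def norm_divide norm_power
    by (intro divide_left_mono mult_pos_pos) auto
qed

lemma sum_tuple_box_power: "(\<Sum>v\<in>tuple_box M d. (r::real) ^ sum_list v) = (\<Sum>u=1..M. r ^ u) ^ d"
proof (induction d)
  case (Suc d)
  have "(\<Sum>v\<in>tuple_box M (Suc d). r ^ sum_list v) = (\<Sum>u=1..M. \<Sum>v\<in>tuple_box M d. r ^ u * r ^ sum_list v)"
    by (simp add: sum_tuple_box_Suc power_add)
  also have "\<dots> = (\<Sum>u=1..M. r ^ u) * (\<Sum>v\<in>tuple_box M d. r ^ sum_list v)"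
    by (simp add: sum_product)
  finally show ?case using Suc by simp
qed (simp add: tuple_box_0)

lemma sum_tuple_box_norm_zIII_term_le:
  assumes "norm q < 1"
  shows "(\<Sum>v\<in>tuple_box M d. norm (zIII_term q s v)) \<le> 1 / (1 - norm q) ^ (sum_list s + d)"
proof -
  let ?r = "norm q"
  have r: "0 \<le> ?r" "?r < 1" using assms by auto
  have geom: "(\<Sum>u=1..M. ?r ^ u) \<le> 1 / (1 - ?r)"
  proof -
    have "(\<Sum>u=1..M. ?r ^ u) \<le> (\<Sum>u<Suc M. ?r ^ u)"
      by (rule sum_mono2) auto
    also have "\<dots> = (1 - ?r ^ Suc M) / (1 - ?r)"
      by (subst sum_gp_strict) (use r in auto)
    also have "\<dots> \<le> 1 / (1 - ?r)"
      using r by (intro divide_right_mono) auto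
    finally show ?thesis .
  qed
  have "tuple_box M d \<subseteq> pos_tuples d"
    by (auto simp: tuple_box_def pos_tuples_def)
  then have "(\<Sum>v\<in>tuple_box M d. norm (zIII_term q s v))
      \<le> (\<Sum>v\<in>tuple_box M d. ?r ^ sum_list v / (1 - ?r) ^ sum_list s)"
    by (intro sum_mono norm_zIII_term_le[OF assms]) auto
  also have "\<dots> = (\<Sum>u=1..M. ?r ^ u) ^ d / (1 - ?r) ^ sum_list s"
    by (simp add: sum_tuple_box_power flip: sum_divide_distrib)
  also have "\<dots> \<le> (1 / (1 - ?r)) ^ d / (1 - ?r) ^ sum_list s"
    using r geom by (intro divide_right_mono power_mono) (auto intro: sum_nonneg)
  also have "\<dots> = 1 / (1 - ?r) ^ (sum_list s + d)"
    by (simp add: power_add power_one_over)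
  finally show ?thesis .
qed

lemma finite_subset_pos_tuples_subset_tuple_box:
  assumes "finite F" "F \<subseteq> pos_tuples d" "(\<Sum>v\<in>F. sum_list v) \<le> M"
  shows "F \<subseteq> tuple_box M d"
proof
  fix v assume v: "v \<in> F"
  have "x \<le> M" if "x \<in> set v" for x
  proof -
    have "x \<le> sum_list v" using that by (simp add: member_le_sum_list)
    also have "\<dots> \<le> (\<Sum>v\<in>F. sum_list v)" by (rule member_le_sum) (use assms(1) v in auto)
    finally show ?thesis using assms(3) by simp
  qed
  then show "v \<in> tuple_box M d"
    using v assms(2) by (auto simp: tuple_box_def pos_tuples_def Suc_le_eq)
qed

lemma zIII_term_summable_on:
  assumes "norm q < 1"
  shows "zIII_term q s summable_on pos_tuples d"
proof (rule abs_summable_summable, rule nonneg_bdd_above_summable_on)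
  show "bdd_above (sum (\<lambda>v. norm (zIII_term q s v)) ` {F. F \<subseteq> pos_tuples d \<and> finite F})"
  proof (rule bdd_aboveI2)
    fix F assume F: "F \<in> {F. F \<subseteq> pos_tuples d \<and> finite F}"
    then have "F \<subseteq> tuple_box (\<Sum>v\<in>F. sum_list v) d"
      by (intro finite_subset_pos_tuples_subset_tuple_box) auto
    then have "(\<Sum>v\<in>F. norm (zIII_term q s v))
        \<le> (\<Sum>v\<in>tuple_box (\<Sum>v\<in>F. sum_list v) d. norm (zIII_term q s v))"
      by (intro sum_mono2) (auto simp: finite_tuple_box)
    also have "\<dots> \<le> 1 / (1 - norm q) ^ (sum_list s + d)"
      by (rule sum_tuple_box_norm_zIII_term_le[OF assms])
    finally show "(\<Sum>v\<in>F. norm (zIII_term q s v)) \<le> 1 / (1 - norm q) ^ (sum_list s + d)" .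
  qed
qed simp

lemma sum_tuple_box_tendsto_infsum:
  fixes f :: "nat list \<Rightarrow> 'a :: {comm_monoid_add, t2_space}"
  assumes "f summable_on pos_tuples d"
  shows "(\<lambda>N. \<Sum>v\<in>tuple_box N d. f v) \<longlonglongrightarrow> infsum f (pos_tuples d)"
proof -
  have "(sum f \<longlongrightarrow> infsum f (pos_tuples d)) (finite_subsets_at_top (pos_tuples d))"
    using has_sum_infsum[OF assms] by (simp add: has_sum_def)
  moreover have "filterlim (\<lambda>N. tuple_box N d) (finite_subsets_at_top (pos_tuples d)) sequentially"
    unfolding filterlim_finite_subsets_at_top
  proof (intro allI impI)
    fix X assume X: "finite X \<and> X \<subseteq> pos_tuples d"
    have "tuple_box N d \<subseteq> pos_tuples d" for N
      by (auto simp: tuple_box_def pos_tuples_def)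
    moreover have "X \<subseteq> tuple_box N d" if "(\<Sum>v\<in>X. sum_list v) \<le> N" for N
      using X that by (intro finite_subset_pos_tuples_subset_tuple_box) auto
    ultimately show "\<forall>\<^sub>F N in sequentially. finite (tuple_box N d) \<and> X \<subseteq> tuple_box N d
        \<and> tuple_box N d \<subseteq> pos_tuples d"
      by (intro eventually_sequentiallyI[of "\<Sum>v\<in>X. sum_list v"]) (auto simp: finite_tuple_box)
  qed
  ultimately show ?thesis
    by (rule filterlim_compose)
qed

fun trunc_corr :: "nat \<Rightarrow> complex \<Rightarrow> nat list \<Rightarrow> nat list \<Rightarrow> complex" where
  "trunc_corr N q (a # s) (u # v) = (1 - q ^ ((u + sum_list v) * (N + 1))) ^ a * trunc_corr N q s v"
| "trunc_corr N q _ _ = 1"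

lemma qgeom_mult_one_minus: "qgeom N q K * (1 - q ^ K) = q ^ K * (1 - q ^ (K * N))"
proof -
  let ?z = "q ^ K"
  have geom: "qgeom N q K = (\<Sum>m=1..N. ?z ^ m)"
    by (simp only: qgeom_def power_mult)
  have zN: "q ^ (K * N) = ?z ^ N"
    by (rule power_mult)
  have eq: "(1 - ?z) * (\<Sum>m=1..N. ?z ^ m) = ?z * (1 - ?z ^ N)"
  proof (cases N)
    case (Suc n)
    then have "(1 - ?z) * (\<Sum>m=1..N. ?z ^ m) = ?z ^ 1 - ?z ^ Suc N"
      by (intro sum_gp_multiplied) simp
    then show ?thesis by (simp add: algebra_simps)
  qed simp
  show ?thesis
    by (metis eq geom zN mult.commute)
qed

lemma one_plus_qgeom_mult_one_minus: "(1 + qgeom N q K) * (1 - q ^ K) = 1 - q ^ (K * (N + 1))"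
  using qgeom_mult_one_minus[of N q K] by (simp add: algebra_simps power_add power_mult)

lemma trunc_weight_mult_qdenom: "trunc_weight N q s v * qdenom q s v = trunc_corr N q s v"
proof (induction s arbitrary: v)
  case (Cons a s)
  show ?case
  proof (cases v)
    case v: (Cons u v')
    let ?K = "u + sum_list v'"
    have "trunc_weight N q (a # s) v * qdenom q (a # s) v
        = ((1 + qgeom N q ?K) * (1 - q ^ ?K)) ^ a * (trunc_weight N q s v' * qdenom q s v')"
      by (simp add: v power_mult_distrib ac_simps)
    then show ?thesis
      by (simp add: v Cons.IH one_plus_qgeom_mult_one_minus)
  qed simp
qed simp

lemma norm_mult_sub_one_le:
  fixes x y :: "'a :: real_normed_algebra_1"
  assumes "norm (x - 1) \<le> (1 + \<delta>) ^ m - 1" "norm (y - 1) \<le> (1 + \<delta>) ^ n - 1" "\<delta> \<ge> 0"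
  shows "norm (x * y - 1) \<le> (1 + \<delta>) ^ (m + n) - 1"
proof -
  have "norm (x * y - 1) = norm ((x - 1) * (y - 1) + (x - 1) + (y - 1))"
    by (simp add: algebra_simps)
  also have "\<dots> \<le> norm ((x - 1) * (y - 1)) + norm (x - 1) + norm (y - 1)"
    by (intro order_trans[OF norm_triangle_ineq] add_right_mono norm_triangle_ineq)
  also have "\<dots> \<le> norm (x - 1) * norm (y - 1) + norm (x - 1) + norm (y - 1)"
    by (simp add: norm_mult_ineq)
  also have "\<dots> \<le> ((1 + \<delta>) ^ m - 1) * ((1 + \<delta>) ^ n - 1) + ((1 + \<delta>) ^ m - 1) + ((1 + \<delta>) ^ n - 1)"
    using assms by (intro add_mono mult_mono) (auto simp: one_le_power)
  also have "\<dots> = (1 + \<delta>) ^ (m + n) - 1"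
    by (simp add: power_add algebra_simps)
  finally show ?thesis .
qed

lemma norm_one_minus_power_sub_one_le:
  fixes e :: "'a :: real_normed_algebra_1"
  assumes "norm e \<le> \<delta>"
  shows "norm ((1 - e) ^ a - 1) \<le> (1 + \<delta>) ^ a - 1"
proof (induction a)
  case (Suc a)
  have "norm ((1 - e) - 1) \<le> (1 + \<delta>) ^ 1 - 1" "\<delta> \<ge> 0"
    using assms norm_ge_zero[of e] by (simp, linarith)
  from norm_mult_sub_one_le[OF this(1) Suc this(2)] show ?case
    by simp
qed simp

lemma norm_trunc_corr_sub_one_le:
  assumes "norm q < 1" "\<forall>x\<in>set v. x > 0"
  shows "norm (trunc_corr N q s v - 1) \<le> (1 + norm q ^ N) ^ sum_list s - 1"
  using assms(2)
proof (induction s arbitrary: v)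
  case (Cons a s)
  show ?case
  proof (cases v)
    case Nil
    then show ?thesis by (simp add: one_le_power)
  next
    case (Cons u v')
    with Cons.prems have pos: "u + sum_list v' > 0" "\<forall>x\<in>set v'. x > 0" by auto
    then have "1 * (N + 1) \<le> (u + sum_list v') * (N + 1)"
      by (intro mult_le_mono1) arith
    then have "N \<le> (u + sum_list v') * (N + 1)"
      by simp
    then have "norm (q ^ ((u + sum_list v') * (N + 1))) \<le> norm q ^ N"
      by (rule norm_power_le_power_of_le[OF assms(1)])
    then have "norm ((1 - q ^ ((u + sum_list v') * (N + 1))) ^ a - 1) \<le> (1 + norm q ^ N) ^ a - 1"
      by (rule norm_one_minus_power_sub_one_le)
    from norm_mult_sub_one_le[OF this Cons.IH[OF pos(2)]] show ?thesis
      by (simp add: Cons)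
  qed
qed simp

text \<open>Summing the geometric series in the \<open>N\<close>-truncation of \<open>W(a + 1, s)\<close> reproduces the term
  of \<open>\<zeta>\<^sub>q\<^sup>I\<^sup>I\<^sup>I[a + 1, s]\<close> up to factors \<open>1 - q ^ (K N)\<close> and \<open>1 - q ^ (K (N + 1))\<close>, all
  within \<open>|q| ^ N\<close> of 1.\<close>
lemma norm_trunc_term_sub_zIII_term_le:
  assumes q: "norm q < 1" and v: "v \<in> pos_tuples (Suc (length s))"
  shows "norm (qgeom N q (sum_list v) * trunc_weight N q (a # s) v - zIII_term q (Suc a # s) v)
    \<le> norm (zIII_term q (Suc a # s) v) * ((1 + norm q ^ N) ^ sum_list (Suc a # s) - 1)"
proof -
  define K where "K = sum_list v"
  define corr where "corr = (1 - q ^ (K * N)) * trunc_corr N q (a # s) v"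
  from v obtain u v' where v_eq: "v = u # v'" and pos: "\<forall>x\<in>set v. x > 0"
    by (cases v) (auto simp: pos_tuples_def)
  then have K: "K > 0" by (simp add: K_def)
  have qdenom_Suc: "qdenom q (Suc a # s) v = (1 - q ^ K) * qdenom q (a # s) v"
    by (simp add: v_eq K_def)
  have "0 < (1 - norm q) ^ sum_list (Suc a # s)"
    using q by simp
  then have "qdenom q (Suc a # s) v \<noteq> 0"
    using norm_qdenom_ge[OF q pos, of "Suc a # s"] by auto
  moreover have "qgeom N q K * trunc_weight N q (a # s) v * qdenom q (Suc a # s) v = q ^ K * corr"
    by (simp add: qdenom_Suc corr_def flip: trunc_weight_mult_qdenom qgeom_mult_one_minus)
  ultimately have "qgeom N q K * trunc_weight N q (a # s) v = zIII_term q (Suc a # s) v * corr"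
    by (simp add: zIII_term_def K_def field_simps)
  then have diff: "qgeom N q K * trunc_weight N q (a # s) v - zIII_term q (Suc a # s) v
      = zIII_term q (Suc a # s) v * (corr - 1)"
    by (simp add: algebra_simps)
  have "norm (q ^ (K * N)) \<le> norm q ^ N"
    using K by (intro norm_power_le_power_of_le[OF q]) simp
  then have "norm ((1 - q ^ (K * N)) - 1) \<le> (1 + norm q ^ N) ^ 1 - 1"
    by simp
  from norm_mult_sub_one_le[OF this norm_trunc_corr_sub_one_le[OF q pos, of N "a # s"]]
  have "norm (corr - 1) \<le> (1 + norm q ^ N) ^ sum_list (Suc a # s) - 1"
    by (simp add: corr_def)
  then have "norm (zIII_term q (Suc a # s) v * (corr - 1))
      \<le> norm (zIII_term q (Suc a # s) v) * ((1 + norm q ^ N) ^ sum_list (Suc a # s) - 1)"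
    unfolding norm_mult by (rule mult_left_mono) simp
  then show ?thesis
    using diff by (simp add: K_def)
qed

lemma norm_trunc_eval_Wword_sub_le:
  assumes q: "norm q < 1"
  shows "norm (trunc_eval N q (Wword (Suc a # s)) (\<lambda>_. 1) 0
      - (\<Sum>v\<in>tuple_box N (Suc (length s)). zIII_term q (Suc a # s) v))
    \<le> ((1 + norm q ^ N) ^ sum_list (Suc a # s) - 1) / (1 - norm q) ^ (sum_list (Suc a # s) + Suc (length s))"
proof -
  let ?B = "tuple_box N (Suc (length s))" and ?f = "zIII_term q (Suc a # s)"
  let ?\<delta> = "(1 + norm q ^ N) ^ sum_list (Suc a # s) - 1"
  have "norm (trunc_eval N q (Wword (Suc a # s)) (\<lambda>_. 1) 0 - sum ?f ?B)
      \<le> (\<Sum>v\<in>?B. norm (qgeom N q (sum_list v) * trunc_weight N q (a # s) v - ?f v))"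
    by (simp add: trunc_eval_Wword norm_sum flip: sum_subtractf)
  also have "\<dots> \<le> (\<Sum>v\<in>?B. norm (?f v)) * ?\<delta>"
    unfolding sum_distrib_right
    by (intro sum_mono norm_trunc_term_sub_zIII_term_le[OF q]) (auto simp: tuple_box_def pos_tuples_def)
  also have "\<dots> \<le> ?\<delta> / (1 - norm q) ^ (sum_list (Suc a # s) + Suc (length s))"
  proof -
    have "0 \<le> ?\<delta>"
      by (simp only: diff_ge_0_iff_ge) (rule one_le_power, simp)
    from mult_right_mono[OF sum_tuple_box_norm_zIII_term_le[OF q,
          where M = N and d = "Suc (length s)" and s = "Suc a # s"] this]
    show ?thesis by simp
  qed
  finally show ?thesis .
qed

lemma trunc_eval_Wword_tendsto:
  assumes q: "norm q < 1" and "admissible s"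
  shows "(\<lambda>N. trunc_eval N q (Wword s) (\<lambda>_. 1) 0) \<longlonglongrightarrow> zIII_series q s"
proof -
  from \<open>admissible s\<close> obtain x t where "s = x # t" "x \<ge> 1"
    by (cases s) (auto simp: admissible_def)
  then obtain a where s: "s = Suc a # t"
    by (metis not0_implies_Suc not_one_le_zero)
  let ?C = "(1 - norm q) ^ (sum_list s + length s)"
  have "(\<lambda>N. \<Sum>v\<in>tuple_box N (length s). zIII_term q s v) \<longlonglongrightarrow> zIII_series q s"
    using sum_tuple_box_tendsto_infsum[OF zIII_term_summable_on[OF q]]
    by (simp add: zIII_series_eq_infsum s)
  moreover have "(\<lambda>N. trunc_eval N q (Wword s) (\<lambda>_. 1) 0
      - (\<Sum>v\<in>tuple_box N (length s). zIII_term q s v)) \<longlonglongrightarrow> 0"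
  proof (rule Lim_null_comparison)
    show "\<forall>\<^sub>F N in sequentially. norm (trunc_eval N q (Wword s) (\<lambda>_. 1) 0
        - (\<Sum>v\<in>tuple_box N (length s). zIII_term q s v)) \<le> ((1 + norm q ^ N) ^ sum_list s - 1) / ?C"
      using norm_trunc_eval_Wword_sub_le[OF q] by (simp add: s)
    have "(\<lambda>N. norm q ^ N) \<longlonglongrightarrow> 0"
      using q by (intro LIMSEQ_power_zero) simp
    then have "(\<lambda>N. ((1 + norm q ^ N) ^ sum_list s - 1) / ?C) \<longlonglongrightarrow> ((1 + 0) ^ sum_list s - 1) / ?C"
      using q by (intro tendsto_divide tendsto_diff tendsto_power tendsto_add tendsto_const) auto
    then show "(\<lambda>N. ((1 + norm q ^ N) ^ sum_list s - 1) / ?C) \<longlonglongrightarrow> 0"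
      by simp
  qed
  ultimately show ?thesis
    by (rule Lim_transform)
qed

section \<open>Duality for \<open>\<zeta>\<^sub>q\<^sup>I\<^sup>I\<^sup>I\<close>\<close>

lemma ncpoly_fin_Wword:
  assumes "admissible s"
  shows "ncpoly_fin (Wword s)"
proof -
  from assms obtain x t where "s = x # t" "x \<ge> 1"
    by (cases s) (auto simp: admissible_def)
  then have "s = Suc (x - 1) # t" by simp
  then show ?thesis by (simp add: Wword_Suc ncpoly_fin_nc_rho_mult ncpoly_fin_ncmonom)
qed

lemma trunc_eval_Wword_comb:
  assumes "Wword_coeffs c"
  shows "trunc_eval N q (Wword_comb c) h S
    = (\<Sum>s\<in>{s. c s \<noteq> 0}. of_rat (c s) * trunc_eval N q (Wword s) h S)"
proof -
  let ?C = "{s. c s \<noteq> 0}"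
  define A where "A = (\<Union>s\<in>?C. ncsupp (Wword s))"
  have fin: "finite A"
    using assms ncpoly_fin_Wword by (auto simp: A_def Wword_coeffs_def ncpoly_fin_iff_finite_ncsupp)
  have supp: "ncsupp (Wword_comb c) \<subseteq> A"
  proof
    fix w assume "w \<in> ncsupp (Wword_comb c)"
    then obtain s where "s \<in> ?C" "c s * Wword s w \<noteq> 0"
      by (auto simp: ncsupp_def Wword_comb_def elim: sum.not_neutral_contains_not_neutral)
    then show "w \<in> A" by (auto simp: A_def ncsupp_def)
  qed
  have "trunc_eval N q (Wword_comb c) h S
      = (\<Sum>w\<in>A. \<Sum>s\<in>?C. of_rat (c s) * (of_rat (Wword s w) * word_op N q w h S))"
    unfolding trunc_eval_superset[OF fin supp]
    by (simp add: Wword_comb_def of_rat_sum of_rat_mult sum_distrib_right mult.assoc)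
  also have "\<dots> = (\<Sum>s\<in>?C. of_rat (c s) * (\<Sum>w\<in>A. of_rat (Wword s w) * word_op N q w h S))"
    by (subst sum.swap) (simp add: sum_distrib_left)
  also have "\<dots> = (\<Sum>s\<in>?C. of_rat (c s) * trunc_eval N q (Wword s) h S)"
    by (intro sum.cong refl arg_cong[where f = "(*) _"] trunc_eval_superset[OF fin, symmetric])
      (auto simp: A_def)
  finally show ?thesis .
qed

lemma trunc_eval_Wword_comb_tendsto:
  assumes "norm q < 1" "Wword_coeffs c"
  shows "(\<lambda>N. trunc_eval N q (Wword_comb c) (\<lambda>_. 1) 0)
    \<longlonglongrightarrow> (\<Sum>s\<in>{s. c s \<noteq> 0}. of_rat (c s) * zIII_series q s)"
  unfolding trunc_eval_Wword_comb[OF assms(2)]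
  using assms by (intro tendsto_sum tendsto_mult_left trunc_eval_Wword_tendsto)
    (auto simp: Wword_coeffs_def)

text \<open>Whichever representation \<open>SOME\<close> picks in the definition of \<open>zIII\<close>, its value is the limit
  of the same sequence, so \<open>zIII\<close> is well defined on the span of the \<open>W(s)\<close> without any linear
  independence argument.\<close>
lemma trunc_eval_tendsto_zIII:
  assumes q: "norm q < 1" and c: "Wword_coeffs c"
  shows "(\<lambda>N. trunc_eval N q (Wword_comb c) (\<lambda>_. 1) 0) \<longlonglongrightarrow> zIII q (Wword_comb c)"
proof -
  let ?Q = "\<lambda>r. \<exists>c'. finite {s. c' s \<noteq> 0} \<and> (\<forall>s. c' s \<noteq> 0 \<longrightarrow> admissible s) \<and>
      Wword_comb c = (\<lambda>w. \<Sum>s\<in>{s. c' s \<noteq> 0}. c' s * Wword s w) \<and>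
      r = (\<Sum>s\<in>{s. c' s \<noteq> 0}. of_rat (c' s) * zIII_series q s)"
  have "?Q (zIII q (Wword_comb c))"
    unfolding zIII_def
    by (rule someI_ex) (use c in \<open>auto simp: Wword_coeffs_def Wword_comb_def\<close>)
  then obtain c' where "Wword_coeffs c'" "Wword_comb c = Wword_comb c'"
      "zIII q (Wword_comb c) = (\<Sum>s\<in>{s. c' s \<noteq> 0}. of_rat (c' s) * zIII_series q s)"
    by (auto simp: Wword_coeffs_def Wword_comb_def)
  then show ?thesis
    using trunc_eval_Wword_comb_tendsto[OF q] by simp
qed

lemma zIII_rho_y_monomial_dual:
  assumes q: "norm q < 1" and "ps \<noteq> []" and ge1: "\<forall>(k, m)\<in>set ps. k \<ge> 1 \<and> m \<ge> 1"
  shows "zIII q (rho_y_monomial ps) = zIII q (rho_y_monomial (rev (map prod.swap ps)))"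
proof -
  have in_span: "\<exists>c. Wword_coeffs c \<and> rho_y_monomial ps' = Wword_comb c"
    if "ps' \<noteq> []" "\<forall>(k, m)\<in>set ps'. k \<ge> 1 \<and> m \<ge> 1" for ps'
    using that by (cases ps') (auto intro!: rho_y_monomial_in_Wword_span)
  obtain c where c: "Wword_coeffs c" "rho_y_monomial ps = Wword_comb c"
    using in_span[of ps] assms by blast
  obtain c' where c': "Wword_coeffs c'" "rho_y_monomial (rev (map prod.swap ps)) = Wword_comb c'"
    using in_span[of "rev (map prod.swap ps)"] assms by auto
  have "trunc_eval N q (rho_y_monomial (rev (map prod.swap ps))) (\<lambda>_. 1) 0
      = trunc_eval N q (rho_y_monomial ps) (\<lambda>_. 1) 0" for N
    using rho_y_value_dual[of N q "rho_y_code ps" 0 0]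
    by (simp add: trunc_eval_rho_y_monomial rho_y_value_def rho_y_code_dual)
  then show ?thesis
    using trunc_eval_tendsto_zIII[OF q c(1)] trunc_eval_tendsto_zIII[OF q c'(1)]
    by (simp add: c c' LIMSEQ_unique)
qed

theorem theorem8p4:
  fixes q :: complex and l :: nat and \<alpha> \<beta> :: "nat \<Rightarrow> nat"
  assumes "norm q < 1"
    and "l \<ge> 1"
    and "\<forall>j\<in>{1..l}. \<alpha> j \<ge> 1 \<and> \<beta> j \<ge> 1"
  shows "zIII q (ncprod ([ncpow (ncsub ncpi ncone) (\<alpha> 1 - 1), ncrho, ncpow ncy (\<beta> 1)]
            @ concat (map (\<lambda>j. [ncpow (ncsub ncpi ncone) (\<alpha> j), ncpow ncy (\<beta> j)]) [2..<l+1])))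
       = zIII q (ncprod ([ncpow (ncsub ncpi ncone) (\<beta> l - 1), ncrho, ncpow ncy (\<alpha> l)]
            @ concat (map (\<lambda>j. [ncpow (ncsub ncpi ncone) (\<beta> j), ncpow ncy (\<alpha> j)]) (rev [1..<l]))))"
proof -
  define ps where "ps = map (\<lambda>j. (\<alpha> j, \<beta> j)) [1..<l+1]"
  have "ps \<noteq> []" "\<forall>(k, m)\<in>set ps. k \<ge> 1 \<and> m \<ge> 1"
    using assms(2,3) by (auto simp: ps_def)
  then have "zIII q (rho_y_monomial ps) = zIII q (rho_y_monomial (rev (map prod.swap ps)))"
    by (rule zIII_rho_y_monomial_dual[OF assms(1)])
  moreover have "\<alpha> 1 \<ge> 1" "\<beta> l \<ge> 1"
    using assms(2,3) by auto
  ultimately show ?thesis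
    unfolding ps_def using assms(2)
    by (simp only: ncprod_upt_eq_rho_y_monomial ncprod_rev_upt_eq_rho_y_monomial)
qed

end
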